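(* Let $G=(V,E)$ be a temporal network with $m=|E|$ temporal edges, let $\alpha$ be the degeneracy of $G_S$, let $\pi$ be a degeneracy ordering of $G_S$, and let $\delta\ge 0$. Consider the procedure OutNeighbours, which for every pair $(u,v)$ with $\{u,v\}\in E(G_S)$ and $\pi(u)<\pi(v)$, and every $w\in N^{+}_{\pi}(u)$ adjacent to $v$, does the following: (i) with $L_1=E_{u,v}$, $L_2=E_{u,w}$, $L_3=E_{v,w}$, it computes for every $e\in L_1$ the first edge $L_{12}[e]$ of $L_2$ with timestamp at least $t(e)$ by a single merged linear scan of $L_1$ and $L_2$, computes for every $f\in L_2$ the first edge $L_{23}[f]$ of $L_3$ with timestamp at least $t(f)$ by binary search in $L_3$, and for each $e\in L_1$ increments out-count$[e]$ if $t(e)\le t(L_{12}[e])\le t(L_{23}[L_{12}[e]])\le t(e)+\delta$; (ii) with $L_1'=E_{v,u}$, $L_2'=E_{v,w}$, $L_3'=E_{u,w}$, it computes for every $e\in L_1'$ the last edge $L_{13}[e]$ of $L_3'$ with timestamp at most $t(e)+\delta$ by a single merged linear scan of $L_1'$ and $L_3'$, computes the first edge $L_{12}[e]$ of $L_2'$ with timestamp at least $t(e)$ by binary search in $L_2'$, and increments out-count$[e]$ if $t(e)\le t(L_{12}[e])\le t(L_{13}[e])\le t(e)+\delta$. Then OutNeighbours runs in time $O(m\,\alpha\log\sigma_{\max})$.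
   Context: A temporal network $G=(V,E)$ is a finite multiset of temporal edges $(x,y,t)$ with $x\neq y\in V$ and timestamp $t=t(e)\in\mathbb{R}$ (from $x$ to $y$; parallel edges in both directions allowed). For distinct $x,y$, $E_{x,y}$ is the list of temporal edges from $x$ to $y$ sorted by increasing timestamp, and $\sigma(x,y)$ is the number of temporal edges with endpoints $x$ and $y$ (either direction); $\sigma_{\max}=\max_{x,y}\sigma(x,y)$. $G_S$ is the simple undirected graph on $V$ with $\{x,y\}$ an edge iff some temporal edge joins $x$ and $y$; $N(x)$ is the neighbourhood of $x$ in $G_S$. For an ordering $\pi$ of $V$, $N^{+}_{\pi}(x)=\{y\in N(x):\pi(x)<\pi(y)\}$. The degeneracy $\alpha$ of $G_S$ is the smallest integer such that some ordering $\pi$ of $V$ satisfies $|N^{+}_{\pi}(x)|\le\alpha$ for all $x$; such an ordering is a degeneracy ordering. Computational model: each list $E_{x,y}$ can be accessed in $O(1)$ time and adjacency in $G_S$ can be tested in $O(1)$ time. *)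

theory Defs
  imports Complex_Main "HOL-Library.Multiset"
begin

type_synonym tedge = "nat \<times> nat \<times> real"

definition temporal_network :: "nat set \<Rightarrow> tedge multiset \<Rightarrow> bool" where
  "temporal_network V E \<longleftrightarrow> finite V \<and>
     (\<forall>(x, y, t) \<in># E. x \<noteq> y \<and> x \<in> V \<and> y \<in> V)"

text \<open>E_{x,y}: the timestamps of the temporal edges from x to y, sorted increasingly.
  An edge of E_{x,y} is identified with its position in this list.\<close>
definition Elist :: "tedge multiset \<Rightarrow> nat \<Rightarrow> nat \<Rightarrow> real list" where
  "Elist E x y = sorted_list_of_multiset
      (image_mset (\<lambda>(a, b, t). t) (filter_mset (\<lambda>(a, b, t). a = x \<and> b = y) E))"

definition sigma :: "tedge multiset \<Rightarrow> nat \<Rightarrow> nat \<Rightarrow> nat" where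
  "sigma E x y = size (filter_mset (\<lambda>(a, b, t). (a = x \<and> b = y) \<or> (a = y \<and> b = x)) E)"

definition sigma_max :: "nat set \<Rightarrow> tedge multiset \<Rightarrow> nat" where
  "sigma_max V E = Max (insert 0 {sigma E x y | x y. x \<in> V \<and> y \<in> V \<and> x \<noteq> y})"

definition adj :: "tedge multiset \<Rightarrow> nat \<Rightarrow> nat \<Rightarrow> bool" where
  "adj E x y \<longleftrightarrow> x \<noteq> y \<and> sigma E x y > 0"

definition Nplus :: "nat set \<Rightarrow> tedge multiset \<Rightarrow> (nat \<Rightarrow> nat) \<Rightarrow> nat \<Rightarrow> nat set" where
  "Nplus V E \<pi> x = {y \<in> V. adj E x y \<and> \<pi> x < \<pi> y}"

definition degeneracy :: "nat set \<Rightarrow> tedge multiset \<Rightarrow> nat" where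
  "degeneracy V E = (LEAST k. \<exists>\<pi>. inj_on \<pi> V \<and> (\<forall>x\<in>V. card (Nplus V E \<pi> x) \<le> k))"

definition degeneracy_ordering :: "nat set \<Rightarrow> tedge multiset \<Rightarrow> (nat \<Rightarrow> nat) \<Rightarrow> bool" where
  "degeneracy_ordering V E \<pi> \<longleftrightarrow> inj_on \<pi> V \<and>
     (\<forall>x\<in>V. card (Nplus V E \<pi> x) \<le> degeneracy V E)"

text \<open>Merged linear scan: for each element of the sorted list L1, the index of the first
  element of the sorted list L2 that is \<ge> it (length L2 if none); second component = steps.\<close>
fun scan_geq :: "real list \<Rightarrow> real list \<Rightarrow> nat \<Rightarrow> nat list \<times> nat" where
  "scan_geq [] ys i = ([], 1)"
| "scan_geq (x # xs) [] i = (let (r, c) = scan_geq xs [] i in (i # r, c + 1))"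
| "scan_geq (x # xs) (y # ys) i =
     (if x \<le> y then (let (r, c) = scan_geq xs (y # ys) i in (i # r, c + 1))
      else (let (r, c) = scan_geq (x # xs) ys (Suc i) in (r, c + 1)))"

text \<open>Merged linear scan: for each x of L1, the number k of elements of L3 that are
  \<le> x + d; the last such edge has index k - 1 (none if k = 0).\<close>
fun scan_leq :: "real \<Rightarrow> real list \<Rightarrow> real list \<Rightarrow> nat \<Rightarrow> nat list \<times> nat" where
  "scan_leq d [] ys i = ([], 1)"
| "scan_leq d (x # xs) [] i = (let (r, c) = scan_leq d xs [] i in (i # r, c + 1))"
| "scan_leq d (x # xs) (y # ys) i =
     (if y \<le> x + d then (let (r, c) = scan_leq d (x # xs) ys (Suc i) in (r, c + 1))
      else (let (r, c) = scan_leq d xs (y # ys) i in (i # r, c + 1)))"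

text \<open>Binary search in the index range [lo, hi) of a sorted list for the first element \<ge> t;
  second component = steps.\<close>
function bs_geq :: "real list \<Rightarrow> real \<Rightarrow> nat \<Rightarrow> nat \<Rightarrow> nat \<times> nat" where
  "bs_geq L t lo hi =
     (if hi \<le> lo then (lo, 1)
      else (let mid = (lo + hi) div 2 in
            if t \<le> L ! mid then (let (r, c) = bs_geq L t lo mid in (r, c + 1))
            else (let (r, c) = bs_geq L t (Suc mid) hi in (r, c + 1))))"
  by pat_completeness auto
termination by (relation "measure (\<lambda>(L, t, lo, hi). hi - lo)") auto

text \<open>Step (i): returns, for every e in L1, whether out-count[e] is incremented, and the cost.\<close>
definition proc_i :: "real \<Rightarrow> real list \<Rightarrow> real list \<Rightarrow> real list \<Rightarrow> bool list \<times> nat" where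
  "proc_i d L1 L2 L3 =
     (let (L12, c1) = scan_geq L1 L2 0;
          bsr = map (\<lambda>f. bs_geq L3 f 0 (length L3)) L2;
          L23 = map fst bsr;
          c2 = sum_list (map snd bsr);
          inc = map (\<lambda>(te, j). j < length L2 \<and> L23 ! j < length L3 \<and> te \<le> L2 ! j \<and>
                        L2 ! j \<le> L3 ! (L23 ! j) \<and> L3 ! (L23 ! j) \<le> te + d) (zip L1 L12)
      in (inc, c1 + c2 + length L1 + 1))"

definition proc_ii :: "real \<Rightarrow> real list \<Rightarrow> real list \<Rightarrow> real list \<Rightarrow> bool list \<times> nat" where
  "proc_ii d L1 L2 L3 =
     (let (L13, c1) = scan_leq d L1 L3 0;
          bsr = map (\<lambda>e. bs_geq L2 e 0 (length L2)) L1;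
          L12 = map fst bsr;
          c2 = sum_list (map snd bsr);
          inc = map (\<lambda>(te, k, j). j < length L2 \<and> 0 < k \<and> te \<le> L2 ! j \<and>
                        L2 ! j \<le> L3 ! (k - 1) \<and> L3 ! (k - 1) \<le> te + d) (zip L1 (zip L13 L12))
      in (inc, c1 + c2 + length L1 + 1))"

text \<open>Total running time of OutNeighbours: for each ordered adjacent pair (u,v) with
  pi u < pi v one step, plus one O(1) adjacency test for every w in N+(u), plus the costs
  of steps (i) and (ii) for every w in N+(u) adjacent to v.\<close>
definition outneighbours_cost :: "nat set \<Rightarrow> tedge multiset \<Rightarrow> (nat \<Rightarrow> nat) \<Rightarrow> real \<Rightarrow> nat" where
  "outneighbours_cost V E \<pi> d =
     (\<Sum>(u, v) \<in> {(u, v). u \<in> V \<and> v \<in> V \<and> adj E u v \<and> \<pi> u < \<pi> v}.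
        1 + card (Nplus V E \<pi> u) +
        (\<Sum>w \<in> {w \<in> Nplus V E \<pi> u. adj E v w}.
           snd (proc_i d (Elist E u v) (Elist E u w) (Elist E v w)) +
           snd (proc_ii d (Elist E v u) (Elist E v w) (Elist E u w))))"

end

theory Submission
  imports Defs "HOL-Library.Log_Nat"
begin

text \<open>For a triangle u, v, w with v, w \<in> N+(u), both steps are linear scans over lists of
  length at most \<sigma>(u,v) + \<sigma>(u,w) plus one binary search per edge of such a list, so they cost
  O((\<sigma>(u,v) + \<sigma>(u,w)) log \<sigma>_max). Summing over w \<in> N+(u) and v \<in> N+(u), each out-pair
  (u,x) of the degeneracy orientation is charged at most 2|N+(u)| \<le> 2\<alpha> times, and the \<sigma>(u,x)
  over all out-pairs add up to at most m because every temporal edge joins exactly one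
  unordered pair, which is oriented in one direction only.\<close>

lemma length_sorted_list_of_multiset: "length (sorted_list_of_multiset M) = size M"
  using size_mset[of "sorted_list_of_multiset M"] by (simp only: mset_sorted_list_of_multiset)

lemma length_Elist: "length (Elist E x y) = size {#(a, b, t) \<in># E. a = x \<and> b = y#}"
  unfolding Elist_def length_sorted_list_of_multiset by simp

lemma sigma_eq_length_Elist:
  assumes "x \<noteq> y"
  shows "sigma E x y = length (Elist E x y) + length (Elist E y x)"
  unfolding length_Elist sigma_def using assms by (induction E) auto

lemma sigma_le_sigma_max:
  assumes "finite V" "x \<in> V" "y \<in> V" "x \<noteq> y"
  shows "sigma E x y \<le> sigma_max V E"
proof -
  have "{sigma E x y | x y. x \<in> V \<and> y \<in> V \<and> x \<noteq> y} \<subseteq> (\<lambda>(x, y). sigma E x y) ` (V \<times> V)"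
    by auto
  then have "finite {sigma E x y | x y. x \<in> V \<and> y \<in> V \<and> x \<noteq> y}"
    using assms(1) finite_subset by blast
  then show ?thesis
    unfolding sigma_max_def using assms by (intro Max_ge) auto
qed

lemma sigma_add_mset:
  "sigma (add_mset (a, b, t) E) u v = sigma E u v + (if {a, b} = {u, v} then 1 else 0)"
  unfolding sigma_def by (auto simp: doubleton_eq_iff)

lemma sum_sigma_le_size:
  assumes "finite P" and asym: "\<And>u v. (u, v) \<in> P \<Longrightarrow> (v, u) \<notin> P"
  shows "(\<Sum>(u, v)\<in>P. sigma E u v) \<le> size E"
proof (induction E)
  case empty
  then show ?case by (simp add: sigma_def)
next
  case (add e E)
  obtain a b t where e: "e = (a, b, t)" by (cases e)
  have "{p \<in> P. {a, b} = {fst p, snd p}} \<subseteq> P \<inter> {(a, b), (b, a)}"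
    by (auto simp: doubleton_eq_iff)
  moreover have "card (P \<inter> {(a, b), (b, a)}) \<le> 1"
    using asym[of a b] by (cases "(a, b) \<in> P"; cases "(b, a) \<in> P") auto
  ultimately have "card {p \<in> P. {a, b} = {fst p, snd p}} \<le> 1"
    by (meson card_mono finite_Int finite.emptyI finite.insertI order_trans)
  moreover have "(\<Sum>(u, v)\<in>P. sigma (add_mset e E) u v)
      = (\<Sum>(u, v)\<in>P. sigma E u v) + card {p \<in> P. {a, b} = {fst p, snd p}}"
    unfolding e sigma_add_mset
    by (simp add: sum.distrib case_prod_beta sum.If_cases assms(1) Int_def)
  ultimately show ?case using add.IH by simp
qed

lemma less_two_power_floorlog: "n < 2 ^ floorlog 2 n"
  using floorlog_bounds[of n 2] by (cases "n = 0") (auto simp: floorlog_def)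

lemma floorlog_le_max_log: "real (floorlog 2 n) \<le> max 1 (log 2 n) + 1"
  using of_int_floor_le[of "log 2 n"] by (auto simp: floorlog_def max_def)

lemma length_Elist_less_two_power:
  assumes "finite V" "x \<in> V" "y \<in> V" "x \<noteq> y"
  shows "length (Elist E x y) < 2 ^ floorlog 2 (sigma_max V E)"
  using sigma_eq_length_Elist[OF assms(4), of E] sigma_le_sigma_max[OF assms, of E]
    less_two_power_floorlog[of "sigma_max V E"]
  by linarith

lemma snd_scan_geq_le: "snd (scan_geq xs ys i) \<le> length xs + length ys + 1"
  by (induction xs ys i rule: scan_geq.induct) (auto split: prod.splits)

lemma snd_scan_leq_le: "snd (scan_leq d xs ys i) \<le> length xs + length ys + 1"
  by (induction d xs ys i rule: scan_leq.induct) (auto split: prod.splits)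

declare bs_geq.simps [simp del]

lemma snd_bs_geq_le: "hi - lo < 2 ^ K \<Longrightarrow> snd (bs_geq L t lo hi) \<le> K + 1"
proof (induction L t lo hi arbitrary: K rule: bs_geq.induct)
  case (1 L t lo hi)
  show ?case
  proof (cases "hi \<le> lo")
    case True
    then show ?thesis by (simp add: bs_geq.simps)
  next
    case False
    define mid where "mid = (lo + hi) div 2"
    obtain K' where K: "K = Suc K'"
      using "1.prems" False by (cases K) auto
    have halves: "mid - lo < 2 ^ K'" "hi - Suc mid < 2 ^ K'"
      using "1.prems" False unfolding K mid_def by auto
    have "snd (bs_geq L t lo hi)
        = (if t \<le> L ! mid then snd (bs_geq L t lo mid) else snd (bs_geq L t (Suc mid) hi)) + 1"
      using False unfolding mid_def by (subst bs_geq.simps) (simp add: Let_def split: prod.splits)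
    then show ?thesis
      using "1.IH"[OF False mid_def] halves unfolding K by fastforce
  qed
qed

lemma snd_proc_i_le:
  assumes "length L3 < 2 ^ K"
  shows "snd (proc_i d L1 L2 L3) \<le> 2 * length L1 + (K + 2) * length L2 + 2"
proof -
  have "(\<Sum>f\<leftarrow>L2. snd (bs_geq L3 f 0 (length L3))) \<le> (\<Sum>f\<leftarrow>L2. K + 1)"
    using assms by (intro sum_list_mono snd_bs_geq_le) simp
  then have "(\<Sum>f\<leftarrow>L2. snd (bs_geq L3 f 0 (length L3))) \<le> length L2 * (K + 1)"
    by (simp add: sum_list_triv)
  with snd_scan_geq_le[of L1 L2 0] show ?thesis
    unfolding proc_i_def by (auto simp: Let_def o_def algebra_simps split: prod.splits)
qed

lemma snd_proc_ii_le:
  assumes "length L2 < 2 ^ K"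
  shows "snd (proc_ii d L1 L2 L3) \<le> (K + 3) * length L1 + length L3 + 2"
proof -
  have "(\<Sum>e\<leftarrow>L1. snd (bs_geq L2 e 0 (length L2))) \<le> (\<Sum>e\<leftarrow>L1. K + 1)"
    using assms by (intro sum_list_mono snd_bs_geq_le) simp
  then have "(\<Sum>e\<leftarrow>L1. snd (bs_geq L2 e 0 (length L2))) \<le> length L1 * (K + 1)"
    by (simp add: sum_list_triv)
  with snd_scan_leq_le[of d L1 L3 0] show ?thesis
    unfolding proc_ii_def by (auto simp: Let_def o_def algebra_simps split: prod.splits)
qed

lemma triangle_cost_le:
  assumes "u \<noteq> v" "u \<noteq> w" "1 \<le> sigma E u v" "length (Elist E v w) < 2 ^ K"
  shows "snd (proc_i d (Elist E u v) (Elist E u w) (Elist E v w))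
       + snd (proc_ii d (Elist E v u) (Elist E v w) (Elist E u w))
       \<le> (K + 7) * (sigma E u v + sigma E u w)"
proof -
  define a where "a = length (Elist E u v)"
  define a' where "a' = length (Elist E v u)"
  define b where "b = length (Elist E u w)"
  have uv: "sigma E u v = a + a'" and uw: "b \<le> sigma E u w"
    using sigma_eq_length_Elist[OF assms(1)] sigma_eq_length_Elist[OF assms(2)]
    unfolding a_def a'_def b_def by auto
  have "snd (proc_i d (Elist E u v) (Elist E u w) (Elist E v w))
       + snd (proc_ii d (Elist E v u) (Elist E v w) (Elist E u w))
       \<le> (2 * a + (K + 2) * b + 2) + ((K + 3) * a' + b + 2)"
    using snd_proc_i_le[OF assms(4)] snd_proc_ii_le[OF assms(4)]
    unfolding a_def a'_def b_def by (intro add_mono)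
  also have "\<dots> \<le> (K + 3) * (a + a' + b) + 4"
    by (simp add: algebra_simps)
  also have "\<dots> \<le> (K + 3) * (sigma E u v + sigma E u w) + 4 * (sigma E u v + sigma E u w)"
    using uv uw assms(3) by (intro add_mono mult_left_mono) auto
  finally show ?thesis by (simp add: algebra_simps)
qed

lemma sum_sum_pairs_le:
  fixes f :: "'a \<Rightarrow> 'b \<Rightarrow> nat"
  assumes "\<And>u. u \<in> V \<Longrightarrow> card (N u) \<le> \<alpha>"
  shows "(\<Sum>u\<in>V. \<Sum>v\<in>N u. \<Sum>w\<in>N u. f u v + f u w) \<le> 2 * \<alpha> * (\<Sum>u\<in>V. \<Sum>v\<in>N u. f u v)"
proof -
  have "(\<Sum>v\<in>N u. \<Sum>w\<in>N u. f u v + f u w) = 2 * card (N u) * (\<Sum>v\<in>N u. f u v)" for u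
  proof -
    have "(\<Sum>v\<in>N u. \<Sum>w\<in>N u. f u v + f u w)
        = card (N u) * (\<Sum>v\<in>N u. f u v) + card (N u) * (\<Sum>w\<in>N u. f u w)"
      by (simp add: sum.distrib sum_distrib_left[symmetric])
    then show ?thesis by simp
  qed
  then have "(\<Sum>u\<in>V. \<Sum>v\<in>N u. \<Sum>w\<in>N u. f u v + f u w) = (\<Sum>u\<in>V. 2 * card (N u) * (\<Sum>v\<in>N u. f u v))"
    by simp
  also have "\<dots> \<le> (\<Sum>u\<in>V. 2 * \<alpha> * (\<Sum>v\<in>N u. f u v))"
    using assms by (intro sum_mono mult_right_mono) auto
  finally show ?thesis by (simp add: sum_distrib_left)
qed

lemma pair_cost_le:
  assumes "finite V" and v: "v \<in> Nplus V E \<pi> u"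
  defines "K \<equiv> floorlog 2 (sigma_max V E)"
  shows "1 + card (Nplus V E \<pi> u) +
      (\<Sum>w \<in> {w \<in> Nplus V E \<pi> u. adj E v w}.
         snd (proc_i d (Elist E u v) (Elist E u w) (Elist E v w)) +
         snd (proc_ii d (Elist E v u) (Elist E v w) (Elist E u w)))
    \<le> (\<Sum>w \<in> Nplus V E \<pi> u. (K + 9) * (sigma E u v + sigma E u w))"
proof -
  let ?N = "Nplus V E \<pi> u"
  let ?s = "\<lambda>w. sigma E u v + sigma E u w"
  let ?h = "\<lambda>w. snd (proc_i d (Elist E u v) (Elist E u w) (Elist E v w)) +
    snd (proc_ii d (Elist E v u) (Elist E v w) (Elist E u w))"
  have fin: "finite ?N"
    using assms(1) unfolding Nplus_def by auto
  have uv: "u \<noteq> v" "1 \<le> sigma E u v" "v \<in> V"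
    using v unfolding Nplus_def adj_def by auto
  have "1 + card ?N \<le> (\<Sum>w\<in>?N. 2)"
    using fin v by (auto simp: Suc_le_eq card_gt_0_iff)
  also have "\<dots> \<le> (\<Sum>w\<in>?N. 2 * ?s w)"
    using uv by (intro sum_mono) auto
  finally have adjacency_tests: "1 + card ?N \<le> (\<Sum>w\<in>?N. 2 * ?s w)" .
  have "(\<Sum>w \<in> {w \<in> ?N. adj E v w}. ?h w) \<le> (\<Sum>w \<in> {w \<in> ?N. adj E v w}. (K + 7) * ?s w)"
  proof (intro sum_mono triangle_cost_le)
    fix w assume "w \<in> {w \<in> ?N. adj E v w}"
    then have "u \<noteq> w" "w \<in> V" "v \<noteq> w"
      unfolding Nplus_def adj_def by auto
    then show "u \<noteq> w" "length (Elist E v w) < 2 ^ K"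
      using length_Elist_less_two_power[OF assms(1) uv(3)] unfolding K_def by auto
  qed (use uv in auto)
  also have "\<dots> \<le> (\<Sum>w\<in>?N. (K + 7) * ?s w)"
    using fin by (intro sum_mono2) auto
  finally have "1 + card ?N + (\<Sum>w \<in> {w \<in> ?N. adj E v w}. ?h w)
      \<le> (\<Sum>w\<in>?N. 2 * ?s w) + (\<Sum>w\<in>?N. (K + 7) * ?s w)"
    using adjacency_tests by linarith
  also have "\<dots> = (\<Sum>w\<in>?N. (K + 9) * ?s w)"
    by (simp flip: sum.distrib add: algebra_simps)
  finally show ?thesis .
qed

lemma outneighbours_cost_le:
  assumes "temporal_network V E" "degeneracy_ordering V E \<pi>"
  shows "outneighbours_cost V E \<pi> d
    \<le> 2 * (floorlog 2 (sigma_max V E) + 9) * degeneracy V E * size E"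
proof -
  define K where "K = floorlog 2 (sigma_max V E)"
  define N where "N = Nplus V E \<pi>"
  have finV: "finite V"
    using assms(1) unfolding temporal_network_def by simp
  have finN: "finite (N u)" and cardN: "u \<in> V \<Longrightarrow> card (N u) \<le> degeneracy V E" for u
    using finV assms(2) unfolding N_def Nplus_def degeneracy_ordering_def by auto
  have pairs: "{(u, v). u \<in> V \<and> v \<in> V \<and> adj E u v \<and> \<pi> u < \<pi> v} = Sigma V N"
    unfolding N_def Nplus_def by auto
  have "(\<Sum>u\<in>V. \<Sum>v\<in>N u. sigma E u v) = (\<Sum>(u, v)\<in>Sigma V N. sigma E u v)"
    using finV finN by (simp add: sum.Sigma)
  also have "\<dots> \<le> size E"
    using finV finN by (intro sum_sigma_le_size) (auto simp: N_def Nplus_def)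
  finally have oriented_sigma: "(\<Sum>u\<in>V. \<Sum>v\<in>N u. sigma E u v) \<le> size E" .
  have "outneighbours_cost V E \<pi> d = (\<Sum>u\<in>V. \<Sum>v\<in>N u. 1 + card (N u) +
      (\<Sum>w \<in> {w \<in> N u. adj E v w}.
         snd (proc_i d (Elist E u v) (Elist E u w) (Elist E v w)) +
         snd (proc_ii d (Elist E v u) (Elist E v w) (Elist E u w))))"
    unfolding outneighbours_cost_def pairs using finV finN by (simp add: sum.Sigma N_def)
  also have "\<dots> \<le> (\<Sum>u\<in>V. \<Sum>v\<in>N u. \<Sum>w\<in>N u. (K + 9) * (sigma E u v + sigma E u w))"
    unfolding N_def K_def using pair_cost_le[OF finV] by (intro sum_mono) blast
  also have "\<dots> = (K + 9) * (\<Sum>u\<in>V. \<Sum>v\<in>N u. \<Sum>w\<in>N u. sigma E u v + sigma E u w)"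
    by (simp add: sum_distrib_left)
  also have "\<dots> \<le> (K + 9) * (2 * degeneracy V E * (\<Sum>u\<in>V. \<Sum>v\<in>N u. sigma E u v))"
    using cardN by (intro mult_left_mono sum_sum_pairs_le) auto
  also have "\<dots> \<le> (K + 9) * (2 * degeneracy V E * size E)"
    using oriented_sigma by (intro mult_left_mono) auto
  finally show ?thesis
    unfolding K_def by (simp add: algebra_simps)
qed

theorem theorem3p3:
  shows "\<exists>C::real. \<forall>V E \<pi> (\<delta>::real).
           temporal_network V E \<and> 0 \<le> \<delta> \<and> degeneracy_ordering V E \<pi> \<longrightarrow>
           real (outneighbours_cost V E \<pi> \<delta>)
             \<le> C * real (size E) * real (degeneracy V E) * max 1 (log 2 (real (sigma_max V E)))"
proof (intro exI allI impI)
  fix V E \<pi> and \<delta> :: real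
  assume "temporal_network V E \<and> 0 \<le> \<delta> \<and> degeneracy_ordering V E \<pi>"
  then have nat_cost: "outneighbours_cost V E \<pi> \<delta>
      \<le> 2 * (floorlog 2 (sigma_max V E) + 9) * degeneracy V E * size E"
    by (intro outneighbours_cost_le) auto
  have cost: "real (outneighbours_cost V E \<pi> \<delta>)
      \<le> 2 * (real (floorlog 2 (sigma_max V E)) + 9) * real (degeneracy V E) * real (size E)"
    using of_nat_mono[where 'a = real, OF nat_cost] by simp
  let ?l = "max 1 (log 2 (real (sigma_max V E)))"
  have "2 * (real (floorlog 2 (sigma_max V E)) + 9) \<le> 22 * ?l"
    using floorlog_le_max_log[of "sigma_max V E"] max.cobounded1[of 1 "log 2 (sigma_max V E)"]
    by argo
  then have "2 * (real (floorlog 2 (sigma_max V E)) + 9) * real (degeneracy V E) * real (size E)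
      \<le> 22 * ?l * real (degeneracy V E) * real (size E)"
    by (intro mult_right_mono) auto
  with cost show "real (outneighbours_cost V E \<pi> \<delta>)
      \<le> 22 * real (size E) * real (degeneracy V E) * ?l"
    by (simp add: algebra_simps)
qed

end
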